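(* Let $X$ be a set and let $\mathcal{L}$ be a nest on $X$. Then $\mathcal{L}$ is interlocking if and only if, for each $L\in\mathcal{L}$, if $X-L$ is a lower set with respect to $\triangleleft_{\mathcal{L}^c}$, then $L$ is a lower set with respect to $\triangleleft_{\mathcal{L}}$.
   Context: A nest on $X$ is a family $\mathcal{L}$ of subsets of $X$ such that for all $M,N\in\mathcal{L}$, either $M\subseteq N$ or $N\subseteq M$. For a family $\mathcal{S}$ of subsets of $X$, define $x \triangleleft_{\mathcal{S}} y$ iff there exists $S\in\mathcal{S}$ with $x\in S$ and $y\notin S$. Let $\mathcal{L}^c=\{X-L : L\in\mathcal{L}\}$. A family $\mathcal{S}$ of subsets of $X$ is interlocking if for every $T\in\mathcal{S}$ with $T=\bigcap\{S : T\subseteq S,\ S\in\mathcal{S}-\{T\}\}$ one has $T=\bigcup\{S : S\subseteq T,\ S\in\mathcal{S}-\{T\}\}$. For a relation $\triangleleft$ on $X$ and $A\subseteq X$, let ${\downarrow}A=\{x\in X : \exists y\in A,\ x\triangleleft y\}$; $A$ is a lower set with respect to $\triangleleft$ if $A={\downarrow}A$. *)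

theory Defs
  imports Main
begin

definition nest :: "'a set \<Rightarrow> 'a set set \<Rightarrow> bool" where
  "nest X L \<longleftrightarrow> (\<forall>M\<in>L. M \<subseteq> X) \<and> (\<forall>M\<in>L. \<forall>N\<in>L. M \<subseteq> N \<or> N \<subseteq> M)"

definition rel_of :: "'a set set \<Rightarrow> 'a \<Rightarrow> 'a \<Rightarrow> bool" where
  "rel_of S x y \<longleftrightarrow> (\<exists>T\<in>S. x \<in> T \<and> y \<notin> T)"

definition compl_fam :: "'a set \<Rightarrow> 'a set set \<Rightarrow> 'a set set" where
  "compl_fam X L = (\<lambda>M. X - M) ` L"

text \<open>Intersection of a family of subsets of X (empty intersection = X).\<close>
definition interlocking :: "'a set \<Rightarrow> 'a set set \<Rightarrow> bool" where
  "interlocking X S \<longleftrightarrow>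
     (\<forall>T\<in>S. T = X \<inter> \<Inter>{U \<in> S - {T}. T \<subseteq> U} \<longrightarrow> T = \<Union>{U \<in> S - {T}. U \<subseteq> T})"

definition down :: "'a set \<Rightarrow> ('a \<Rightarrow> 'a \<Rightarrow> bool) \<Rightarrow> 'a set \<Rightarrow> 'a set" where
  "down X r A = {x \<in> X. \<exists>y\<in>A. r x y}"

definition lower_set :: "'a set \<Rightarrow> ('a \<Rightarrow> 'a \<Rightarrow> bool) \<Rightarrow> 'a set \<Rightarrow> bool" where
  "lower_set X r A \<longleftrightarrow> A = down X r A"

end

theory Submission
  imports Defs
begin

text \<open>In a nest, a member M is a lower set for the induced relation exactly when it is the union
  of the members strictly below it, and X - M is a lower set for the complementary nest exactly
  when M is the intersection of the members strictly above it. With these two translations the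
  theorem is the definition of interlocking. The second translation is the first one applied to
  the family of complements, in which X - M is comparable with every member, followed by
  De Morgan.\<close>

lemma lower_set_rel_of_iff_Union:
  assumes "M \<subseteq> X" and comparable: "\<forall>T\<in>S. T \<subseteq> M \<or> M \<subseteq> T"
  shows "lower_set X (rel_of S) M \<longleftrightarrow> M = \<Union>{U \<in> S - {M}. U \<subseteq> M}"
proof
  assume "lower_set X (rel_of S) M"
  show "M = \<Union>{U \<in> S - {M}. U \<subseteq> M}"
  proof (intro equalityI subsetI)
    fix x assume "x \<in> M"
    with \<open>lower_set X (rel_of S) M\<close> have "x \<in> down X (rel_of S) M"
      unfolding lower_set_def by blast
    then obtain y T where "y \<in> M" "T \<in> S" "x \<in> T" "y \<notin> T"
      unfolding down_def rel_of_def by blast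
    with comparable show "x \<in> \<Union>{U \<in> S - {M}. U \<subseteq> M}" by blast
  qed blast
next
  assume M_Union: "M = \<Union>{U \<in> S - {M}. U \<subseteq> M}"
  show "lower_set X (rel_of S) M"
    unfolding lower_set_def
  proof (intro equalityI subsetI)
    fix x assume "x \<in> M"
    then obtain U where "U \<in> S" "U \<subset> M" "x \<in> U" using M_Union by blast
    with \<open>M \<subseteq> X\<close> show "x \<in> down X (rel_of S) M"
      unfolding down_def rel_of_def by blast
  next
    fix x assume "x \<in> down X (rel_of S) M"
    with comparable show "x \<in> M"
      unfolding down_def rel_of_def by blast
  qed
qed

lemma Union_compl_fam_below:
  assumes "\<forall>U\<in>L. U \<subseteq> X" and "M \<subseteq> X"
  shows "\<Union>{V \<in> compl_fam X L - {X - M}. V \<subseteq> X - M} = X - \<Inter>{U \<in> L - {M}. M \<subseteq> U}"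
proof (intro equalityI subsetI)
  fix x assume "x \<in> X - \<Inter>{U \<in> L - {M}. M \<subseteq> U}"
  then obtain U where "U \<in> L" "U \<noteq> M" "M \<subseteq> U" "x \<in> X - U" by blast
  moreover have "X - U \<noteq> X - M"
    using \<open>U \<in> L\<close> \<open>U \<noteq> M\<close> assms by blast
  ultimately show "x \<in> \<Union>{V \<in> compl_fam X L - {X - M}. V \<subseteq> X - M}"
    unfolding compl_fam_def by blast
next
  fix x assume "x \<in> \<Union>{V \<in> compl_fam X L - {X - M}. V \<subseteq> X - M}"
  then obtain U where "U \<in> L" "X - U \<noteq> X - M" "X - U \<subseteq> X - M" "x \<in> X - U"
    unfolding compl_fam_def by blast
  with assms show "x \<in> X - \<Inter>{U \<in> L - {M}. M \<subseteq> U}" by blast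
qed

lemma lower_set_compl_iff_Inter:
  assumes "nest X L" and "M \<in> L"
  shows "lower_set X (rel_of (compl_fam X L)) (X - M) \<longleftrightarrow> M = X \<inter> \<Inter>{U \<in> L - {M}. M \<subseteq> U}"
proof -
  have "M \<subseteq> X" and subsets: "\<forall>U\<in>L. U \<subseteq> X"
    using assms unfolding nest_def by auto
  have "\<forall>V\<in>compl_fam X L. V \<subseteq> X - M \<or> X - M \<subseteq> V"
    using assms unfolding nest_def compl_fam_def by blast
  then have "lower_set X (rel_of (compl_fam X L)) (X - M) \<longleftrightarrow>
      X - M = \<Union>{V \<in> compl_fam X L - {X - M}. V \<subseteq> X - M}"
    by (intro lower_set_rel_of_iff_Union) auto
  also have "\<dots> \<longleftrightarrow> X - M = X - \<Inter>{U \<in> L - {M}. M \<subseteq> U}"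
    by (simp only: Union_compl_fam_below[OF subsets \<open>M \<subseteq> X\<close>])
  also have "\<dots> \<longleftrightarrow> M = X \<inter> \<Inter>{U \<in> L - {M}. M \<subseteq> U}"
    using \<open>M \<subseteq> X\<close> by blast
  finally show ?thesis .
qed

theorem theorem3p5:
  fixes X :: "'a set" and L :: "'a set set"
  assumes "nest X L"
  shows "interlocking X L \<longleftrightarrow>
    (\<forall>M\<in>L. lower_set X (rel_of (compl_fam X L)) (X - M) \<longrightarrow> lower_set X (rel_of L) M)"
proof -
  have "lower_set X (rel_of L) M \<longleftrightarrow> M = \<Union>{U \<in> L - {M}. U \<subseteq> M}" if "M \<in> L" for M
    using assms that unfolding nest_def by (intro lower_set_rel_of_iff_Union) auto
  then show ?thesis
    unfolding interlocking_def using lower_set_compl_iff_Inter[OF assms] by auto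
qed

end
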